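(* Let $G=(V,E)$ be a connected undirected $(D,c)$-uniform graph with $n=|V|$ vertices and $\delta$-mixing time $T(n)$ for $\delta=\frac{1}{(2cn)^2}$. For an edge set $S\subseteq E$ with $|S|=k$, the probability $P_{\ge 1}$ that a "good start" random walk of length $t$ traverses at least one edge of $S$ satisfies $P_{\geq 1} = \Omega\!\left(\frac{tk}{T(n)|E|}\right)$.
   Context: An undirected graph is $(D,c)$-uniform if every vertex has degree between $D$ and $cD$ (so $D$ is the minimum degree). A standard random walk moves at each step to a uniformly random neighbor; its stationary distribution is $\mu(v)=d_v/(2|E|)$. The $\delta$-mixing time is the smallest $t'$ such that for every starting vertex the distribution $\mu'$ after $t'$ steps satisfies $\|\mu-\mu'\|_\infty\le\delta$. A "good start" random walk of length $t$ starts at vertex $v$ with probability $d_v/(2|E|)$ and then performs $t$ steps of the standard random walk. Standing assumptions: $T(n)$ stays bounded as $n\to\infty$, $D$ grows with $n$, and $t=O(|E|/k)$. *)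

theory Defs
  imports Complex_Main
begin

definition ugraph :: "nat set \<Rightarrow> (nat \<Rightarrow> nat \<Rightarrow> bool) \<Rightarrow> bool" where
  "ugraph V adj \<longleftrightarrow> finite V \<and> V \<noteq> {} \<and>
     (\<forall>u v. adj u v \<longrightarrow> u \<in> V \<and> v \<in> V \<and> u \<noteq> v \<and> adj v u)"

definition edges :: "nat set \<Rightarrow> (nat \<Rightarrow> nat \<Rightarrow> bool) \<Rightarrow> nat set set" where
  "edges V adj = {{u, v} | u v. u \<in> V \<and> v \<in> V \<and> adj u v}"

definition connected_graph :: "nat set \<Rightarrow> (nat \<Rightarrow> nat \<Rightarrow> bool) \<Rightarrow> bool" where
  "connected_graph V adj \<longleftrightarrow> (\<forall>u\<in>V. \<forall>v\<in>V. adj\<^sup>*\<^sup>* u v)"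

definition degree :: "nat set \<Rightarrow> (nat \<Rightarrow> nat \<Rightarrow> bool) \<Rightarrow> nat \<Rightarrow> nat" where
  "degree V adj u = card {v \<in> V. adj u v}"

definition uniform_graph :: "nat set \<Rightarrow> (nat \<Rightarrow> nat \<Rightarrow> bool) \<Rightarrow> nat \<Rightarrow> real \<Rightarrow> bool" where
  "uniform_graph V adj D c \<longleftrightarrow>
     (\<forall>v\<in>V. D \<le> degree V adj v \<and> real (degree V adj v) \<le> c * real D)"

definition stat_dist :: "nat set \<Rightarrow> (nat \<Rightarrow> nat \<Rightarrow> bool) \<Rightarrow> nat \<Rightarrow> real" where
  "stat_dist V adj v = real (degree V adj v) / (2 * real (card (edges V adj)))"

definition trans_prob :: "nat set \<Rightarrow> (nat \<Rightarrow> nat \<Rightarrow> bool) \<Rightarrow> nat \<Rightarrow> nat \<Rightarrow> real" where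
  "trans_prob V adj u w = (if adj u w then 1 / real (degree V adj u) else 0)"

fun walk_dist :: "nat set \<Rightarrow> (nat \<Rightarrow> nat \<Rightarrow> bool) \<Rightarrow> nat \<Rightarrow> nat \<Rightarrow> nat \<Rightarrow> real" where
  "walk_dist V adj 0 v u = (if u = v then 1 else 0)"
| "walk_dist V adj (Suc t) v u = (\<Sum>w\<in>V. walk_dist V adj t v w * trans_prob V adj w u)"

definition mixed_at :: "nat set \<Rightarrow> (nat \<Rightarrow> nat \<Rightarrow> bool) \<Rightarrow> real \<Rightarrow> nat \<Rightarrow> bool" where
  "mixed_at V adj \<delta> t \<longleftrightarrow>
     (\<forall>v\<in>V. \<forall>u\<in>V. \<bar>stat_dist V adj u - walk_dist V adj t v u\<bar> \<le> \<delta>)"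

definition is_mixing_time :: "nat set \<Rightarrow> (nat \<Rightarrow> nat \<Rightarrow> bool) \<Rightarrow> real \<Rightarrow> nat \<Rightarrow> bool" where
  "is_mixing_time V adj \<delta> T \<longleftrightarrow> mixed_at V adj \<delta> T \<and> (\<forall>t<T. \<not> mixed_at V adj \<delta> t)"

text \<open>Vertex sequences of length t+1 (potential walks with t steps).\<close>
definition walks :: "nat set \<Rightarrow> nat \<Rightarrow> nat list set" where
  "walks V t = {xs. length xs = Suc t \<and> set xs \<subseteq> V}"

text \<open>Probability of the vertex sequence under a good-start walk.\<close>
definition walk_weight :: "nat set \<Rightarrow> (nat \<Rightarrow> nat \<Rightarrow> bool) \<Rightarrow> nat list \<Rightarrow> real" where
  "walk_weight V adj xs = stat_dist V adj (hd xs) *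
     (\<Prod>i<length xs - 1. trans_prob V adj (xs ! i) (xs ! Suc i))"

definition traverses :: "nat set set \<Rightarrow> nat list \<Rightarrow> bool" where
  "traverses S xs \<longleftrightarrow> (\<exists>i < length xs - 1. {xs ! i, xs ! Suc i} \<in> S)"

definition hit_prob :: "nat set \<Rightarrow> (nat \<Rightarrow> nat \<Rightarrow> bool) \<Rightarrow> nat \<Rightarrow> nat set set \<Rightarrow> real" where
  "hit_prob V adj t S = (\<Sum>xs\<in>{xs \<in> walks V t. traverses S xs}. walk_weight V adj xs)"

end

theory Submission
  imports Defs
begin

text \<open>
  Let \<open>a = k / |E|\<close> be the probability that one step of the stationary walk crosses \<open>S\<close>.
  Sample \<open>m\<close> steps of the walk spaced \<open>T + 1\<close> apart, with \<open>m\<close> about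
  \<open>min (t / (T + 1)) (1 / (4 a))\<close>, and let \<open>N\<close> count the sampled steps that cross \<open>S\<close>.
  By stationarity \<open>E N = m a\<close>. Between two sampled steps the walk mixes, so each pair of
  them crosses \<open>S\<close> with probability at most \<open>3/2 a\<^sup>2\<close>, whence \<open>E N\<^sup>2 \<le> m a + 3/2 m\<^sup>2 a\<^sup>2\<close>.
  The pointwise inequality \<open>[N > 0] \<ge> N - N\<^sup>2 / 2\<close> gives \<open>P (N > 0) \<ge> m a / 4\<close>, which is of
  order \<open>min 1 (t a / T)\<close>; the hypothesis \<open>t k = O(|E|)\<close> makes this \<open>\<Omega>(t k / (T |E|))\<close>.
\<close>

section \<open>Walks as vertex sequences\<close>

lemma finite_walks: "finite V \<Longrightarrow> finite (walks V t)"
  unfolding walks_def using finite_lists_length_eq[of V "Suc t"] by (simp add: conj_commute)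

lemma walks_nonempty: "xs \<in> walks V t \<Longrightarrow> xs \<noteq> []"
  unfolding walks_def by auto

lemma last_in_walks: "xs \<in> walks V t \<Longrightarrow> last xs \<in> V"
  using last_in_set[OF walks_nonempty] unfolding walks_def by blast

lemma walks_0: "walks V 0 = (\<lambda>x. [x]) ` V"
  unfolding walks_def by (auto simp: length_Suc_conv)

lemma walks_Suc: "walks V (Suc t) = (\<lambda>(ys, y). ys @ [y]) ` (walks V t \<times> V)"
proof (intro equalityI subsetI)
  fix xs assume xs: "xs \<in> walks V (Suc t)"
  then have "xs = butlast xs @ [last xs]" using walks_nonempty by simp
  moreover have "butlast xs \<in> walks V t" "last xs \<in> V"
    using xs by (auto simp: walks_def dest: in_set_butlastD intro: last_in_walks)
  ultimately show "xs \<in> (\<lambda>(ys, y). ys @ [y]) ` (walks V t \<times> V)" by force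
qed (auto simp: walks_def)

lemma sum_walks_0: "(\<Sum>xs\<in>walks V 0. f xs) = (\<Sum>x\<in>V. f [x])"
  unfolding walks_0 by (subst sum.reindex) (auto simp: inj_on_def)

lemma sum_walks_Suc:
  "(\<Sum>xs\<in>walks V (Suc t). f xs) = (\<Sum>ys\<in>walks V t. \<Sum>y\<in>V. f (ys @ [y]))"
proof -
  have "inj_on (\<lambda>(ys, y). ys @ [y]) (walks V t \<times> V)"
    by (auto simp: inj_on_def)
  then have "(\<Sum>xs\<in>walks V (Suc t). f xs) = (\<Sum>(ys, y)\<in>walks V t \<times> V. f (ys @ [y]))"
    unfolding walks_Suc by (subst sum.reindex) (auto intro!: sum.cong)
  then show ?thesis by (simp add: sum.cartesian_product)
qed

lemma walk_weight_snoc: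
  assumes "ys \<noteq> []"
  shows "walk_weight V adj (ys @ [y]) = walk_weight V adj ys * trans_prob V adj (last ys) y"
proof -
  obtain n where n: "length ys = Suc n" using assms by (cases ys) auto
  have "(\<Prod>i<n. trans_prob V adj ((ys @ [y]) ! i) ((ys @ [y]) ! Suc i))
      = (\<Prod>i<n. trans_prob V adj (ys ! i) (ys ! Suc i))"
    using n by (intro prod.cong) (auto simp: nth_append)
  moreover have "(ys @ [y]) ! n = last ys" "(ys @ [y]) ! Suc n = y"
    using n assms by (simp_all add: nth_append last_conv_nth)
  ultimately show ?thesis using n assms unfolding walk_weight_def by (simp add: mult.assoc)
qed

definition crosses_at :: "nat set set \<Rightarrow> nat \<Rightarrow> nat list \<Rightarrow> bool" where
  "crosses_at S i xs \<longleftrightarrow> {xs ! i, xs ! Suc i} \<in> S"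

lemma crosses_at_take: "i < k \<Longrightarrow> crosses_at S i (take (Suc k) xs) \<longleftrightarrow> crosses_at S i xs"
  unfolding crosses_at_def by simp

lemma traverses_iff_crosses_at: "traverses S xs \<longleftrightarrow> (\<exists>i < length xs - 1. crosses_at S i xs)"
  unfolding traverses_def crosses_at_def ..

section \<open>Expectations over good-start walks\<close>

locale walk_graph =
  fixes V :: "nat set" and adj :: "nat \<Rightarrow> nat \<Rightarrow> bool"
  assumes ugraph: "ugraph V adj"
    and degree_pos: "\<And>v. v \<in> V \<Longrightarrow> 0 < degree V adj v"
begin

abbreviation "P \<equiv> trans_prob V adj"
abbreviation "\<mu> \<equiv> stat_dist V adj"

lemma finite_V: "finite V"
  using ugraph by (simp add: ugraph_def)

lemma adjD: "adj u v \<Longrightarrow> u \<in> V \<and> v \<in> V \<and> u \<noteq> v \<and> adj v u"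
  using ugraph by (simp add: ugraph_def)

lemma trans_prob_nonneg: "0 \<le> P u v"
  unfolding trans_prob_def by simp

lemma trans_prob_outside: "v \<notin> V \<Longrightarrow> P u v = 0"
  unfolding trans_prob_def using adjD by auto

lemma sum_trans_prob: "u \<in> V \<Longrightarrow> (\<Sum>y\<in>V. P u y) = 1"
  using degree_pos[of u] finite_V
  by (auto simp: trans_prob_def sum.If_cases degree_def Int_def card_gt_0_iff)

lemma stat_dist_nonneg: "0 \<le> \<mu> u"
  unfolding stat_dist_def by simp

lemma stat_dist_stationary: "u \<in> V \<Longrightarrow> (\<Sum>x\<in>V. \<mu> x * P x u) = \<mu> u"
proof -
  have "\<mu> x * P x u = of_bool (adj u x) / (2 * real (card (edges V adj)))" if "x \<in> V" for x
    using degree_pos[OF that] adjD[of x u] adjD[of u x]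
    by (auto simp: trans_prob_def stat_dist_def)
  then have "(\<Sum>x\<in>V. \<mu> x * P x u) = real (card {x\<in>V. adj u x}) / (2 * real (card (edges V adj)))"
    using finite_V by (simp add: sum_divide_distrib[symmetric] of_bool_def sum.If_cases Int_def)
  then show "(\<Sum>x\<in>V. \<mu> x * P x u) = \<mu> u"
    by (simp add: stat_dist_def degree_def)
qed

lemma walk_dist_Suc_left:
  assumes "v \<in> V"
  shows "walk_dist V adj (Suc s) v u = (\<Sum>x\<in>V. P v x * walk_dist V adj s x u)"
proof (induction s arbitrary: u)
  case 0
  show ?case
    using finite_V assms trans_prob_outside[of u v]
    by (cases "u \<in> V")
       (simp_all add: if_distrib[of "\<lambda>z. z * _"] if_distrib[of "\<lambda>z. _ * z"] cong: if_cong)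
next
  case (Suc s)
  have "walk_dist V adj (Suc (Suc s)) v u
      = (\<Sum>y\<in>V. (\<Sum>x\<in>V. P v x * walk_dist V adj s x y) * P y u)"
    by (simp only: walk_dist.simps(2)[of _ _ "Suc s"] Suc)
  also have "\<dots> = (\<Sum>x\<in>V. P v x * walk_dist V adj (Suc s) x u)"
    by (simp add: sum_distrib_left sum_distrib_right mult.assoc) (rule sum.swap)
  finally show ?case .
qed

lemma walk_dist_stationary: "u \<in> V \<Longrightarrow> (\<Sum>x\<in>V. \<mu> x * walk_dist V adj s x u) = \<mu> u"
proof (induction s arbitrary: u)
  case 0
  then show ?case using finite_V by (simp add: if_distrib cong: if_cong)
next
  case (Suc s)
  have "(\<Sum>x\<in>V. \<mu> x * walk_dist V adj (Suc s) x u)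
      = (\<Sum>y\<in>V. (\<Sum>x\<in>V. \<mu> x * walk_dist V adj s x y) * P y u)"
    by (simp add: sum_distrib_left sum_distrib_right mult.assoc) (rule sum.swap)
  also have "\<dots> = \<mu> u"
    using Suc stat_dist_stationary by simp
  finally show ?case .
qed

text \<open>Each step of the walk averages over the next positions, so an upper bound on the
  distribution at time \<open>T\<close>, uniform in the start vertex, persists at all later times.\<close>
lemma walk_dist_le_after:
  assumes "\<forall>v\<in>V. walk_dist V adj T v u \<le> b" "T \<le> s"
  shows "\<forall>v\<in>V. walk_dist V adj s v u \<le> b"
  using assms(2)
proof (induction s rule: dec_induct)
  case base
  show ?case using assms(1) .
next
  case (step s)
  show ?case
  proof
    fix v assume v: "v \<in> V"
    have "walk_dist V adj (Suc s) v u \<le> (\<Sum>x\<in>V. P v x * b)"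
      unfolding walk_dist_Suc_left[OF v]
      using step.IH by (intro sum_mono mult_left_mono trans_prob_nonneg) auto
    also have "\<dots> = b"
      using sum_trans_prob[OF v] by (simp add: sum_distrib_right[symmetric])
    finally show "walk_dist V adj (Suc s) v u \<le> b" .
  qed
qed

lemma walk_weight_nonneg: "0 \<le> walk_weight V adj xs"
  unfolding walk_weight_def
  by (intro mult_nonneg_nonneg stat_dist_nonneg prod_nonneg) (auto intro: trans_prob_nonneg)

definition walk_expect :: "nat \<Rightarrow> (nat list \<Rightarrow> real) \<Rightarrow> real" where
  "walk_expect t f = (\<Sum>xs\<in>walks V t. walk_weight V adj xs * f xs)"

lemma walk_expect_cong:
  "(\<And>xs. xs \<in> walks V t \<Longrightarrow> f xs = g xs) \<Longrightarrow> walk_expect t f = walk_expect t g"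
  unfolding walk_expect_def by (intro sum.cong) auto

lemma walk_expect_mono:
  "(\<And>xs. xs \<in> walks V t \<Longrightarrow> f xs \<le> g xs) \<Longrightarrow> walk_expect t f \<le> walk_expect t g"
  unfolding walk_expect_def by (intro sum_mono mult_left_mono walk_weight_nonneg)

lemma walk_expect_nonneg: "(\<And>xs. xs \<in> walks V t \<Longrightarrow> 0 \<le> f xs) \<Longrightarrow> 0 \<le> walk_expect t f"
  using walk_expect_mono[of t "\<lambda>_. 0" f] by (simp add: walk_expect_def)

lemma walk_expect_cmult: "walk_expect t (\<lambda>xs. c * f xs) = c * walk_expect t f"
  unfolding walk_expect_def by (simp add: sum_distrib_left mult_ac)

lemma walk_expect_multc: "walk_expect t (\<lambda>xs. f xs * c) = walk_expect t f * c"
  using walk_expect_cmult[of t c f] by (simp add: mult.commute)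

lemma walk_expect_add: "walk_expect t (\<lambda>xs. f xs + g xs) = walk_expect t f + walk_expect t g"
  unfolding walk_expect_def by (simp add: distrib_left sum.distrib)

lemma walk_expect_sum:
  "walk_expect t (\<lambda>xs. \<Sum>x\<in>A. f x xs) = (\<Sum>x\<in>A. walk_expect t (f x))"
  unfolding walk_expect_def by (simp add: sum_distrib_left) (rule sum.swap)

lemma walk_expect_0: "walk_expect 0 f = (\<Sum>x\<in>V. \<mu> x * f [x])"
  unfolding walk_expect_def sum_walks_0 by (simp add: walk_weight_def)

lemma walk_expect_Suc:
  "walk_expect (Suc t) f = walk_expect t (\<lambda>ys. \<Sum>y\<in>V. P (last ys) y * f (ys @ [y]))"
  unfolding walk_expect_def sum_walks_Suc
  by (intro sum.cong refl) (simp add: sum_distrib_left walk_weight_snoc walks_nonempty mult_ac)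

lemma walk_expect_split_last:
  "walk_expect t f = (\<Sum>x\<in>V. walk_expect t (\<lambda>ys. f ys * of_bool (last ys = x)))"
  unfolding walk_expect_sum[symmetric] using finite_V
  by (intro walk_expect_cong) (simp add: of_bool_def last_in_walks if_distrib cong: if_cong)

lemma walk_expect_prefix:
  "walk_expect (m + s) (\<lambda>xs. g (take (Suc m) xs)) = walk_expect m g"
proof (induction s)
  case 0
  show ?case by (auto intro!: walk_expect_cong simp: walks_def)
next
  case (Suc s)
  have "walk_expect (m + Suc s) (\<lambda>xs. g (take (Suc m) xs))
      = walk_expect (m + s) (\<lambda>ys. (\<Sum>y\<in>V. P (last ys) y) * g (take (Suc m) ys))"
    unfolding add_Suc_right walk_expect_Suc
    by (intro walk_expect_cong) (simp add: sum_distrib_right walks_def)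
  also have "\<dots> = walk_expect (m + s) (\<lambda>ys. g (take (Suc m) ys))"
    by (intro walk_expect_cong) (simp add: sum_trans_prob last_in_walks)
  finally show ?case using Suc by simp
qed

lemma walk_expect_prefix_last:
  assumes "u \<in> V"
  shows "walk_expect (m + s) (\<lambda>xs. g (take (Suc m) xs) * of_bool (last xs = u))
       = walk_expect m (\<lambda>ys. g ys * walk_dist V adj s (last ys) u)"
  using assms
proof (induction s arbitrary: u)
  case 0
  show ?case by (auto intro!: walk_expect_cong simp: walks_def)
next
  case (Suc s)
  let ?g = "\<lambda>ys. g (take (Suc m) ys)"
  have "walk_expect (m + Suc s) (\<lambda>xs. ?g xs * of_bool (last xs = u))
      = walk_expect (m + s) (\<lambda>ys. \<Sum>x\<in>V. P x u * (?g ys * of_bool (last ys = x)))"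
    unfolding add_Suc_right walk_expect_Suc using finite_V Suc.prems
    by (intro walk_expect_cong)
       (simp add: walks_def of_bool_def if_distrib last_in_walks mult_ac cong: if_cong)
  also have "\<dots> = (\<Sum>x\<in>V. P x u * walk_expect m (\<lambda>ys. g ys * walk_dist V adj s (last ys) x))"
    by (simp add: walk_expect_sum walk_expect_cmult Suc.IH)
  also have "\<dots> = walk_expect m (\<lambda>ys. g ys * walk_dist V adj (Suc s) (last ys) u)"
    by (simp add: walk_expect_sum[symmetric] walk_expect_cmult[symmetric] sum_distrib_left mult_ac)
  finally show ?case .
qed

lemma walk_expect_last: "walk_expect t (\<lambda>ys. f (last ys)) = (\<Sum>x\<in>V. \<mu> x * f x)"
proof -
  have "walk_expect t (\<lambda>ys. f (last ys))
      = (\<Sum>x\<in>V. walk_expect t (\<lambda>ys. f x * of_bool (last ys = x)))"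
    by (subst walk_expect_split_last) (auto intro!: sum.cong walk_expect_cong)
  also have "\<dots> = (\<Sum>x\<in>V. f x * walk_expect (0 + t) (\<lambda>ys. 1 * of_bool (last ys = x)))"
    by (simp add: walk_expect_cmult)
  also have "\<dots> = (\<Sum>x\<in>V. f x * \<mu> x)"
    using walk_expect_prefix_last[where g="\<lambda>_. 1" and m=0 and s=t]
    by (simp add: walk_expect_0 walk_dist_stationary)
  finally show ?thesis by (simp add: mult.commute)
qed

section \<open>Crossing probabilities\<close>

definition cross_prob :: "nat set set \<Rightarrow> nat \<Rightarrow> real" where
  "cross_prob S x = (\<Sum>y\<in>V. P x y * of_bool ({x, y} \<in> S))"

lemma cross_prob_nonneg: "0 \<le> cross_prob S x"
  unfolding cross_prob_def by (intro sum_nonneg mult_nonneg_nonneg trans_prob_nonneg) simp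

definition cross_rate :: "nat set set \<Rightarrow> real" where
  "cross_rate S = (\<Sum>x\<in>V. \<mu> x * cross_prob S x)"

lemma walk_expect_crosses_at_last:
  "walk_expect (Suc j) (\<lambda>xs. g (take (Suc j) xs) * of_bool (crosses_at S j xs))
     = walk_expect j (\<lambda>ys. g ys * cross_prob S (last ys))"
  unfolding walk_expect_Suc cross_prob_def
proof (intro walk_expect_cong)
  fix ys assume "ys \<in> walks V j"
  then have "length ys = Suc j" by (simp add: walks_def)
  moreover from this have "ys ! j = last ys" by (cases ys rule: rev_cases) (auto simp: nth_append)
  ultimately show "(\<Sum>y\<in>V. P (last ys) y *
        (g (take (Suc j) (ys @ [y])) * of_bool (crosses_at S j (ys @ [y]))))
      = g ys * (\<Sum>y\<in>V. P (last ys) y * of_bool ({last ys, y} \<in> S))"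
    by (simp add: crosses_at_def nth_append sum_distrib_left mult_ac)
qed

lemma expect_crosses_at:
  assumes "i < t"
  shows "walk_expect t (\<lambda>xs. of_bool (crosses_at S i xs)) = cross_rate S"
proof -
  obtain s where t: "t = Suc i + s" using assms less_iff_Suc_add by auto
  have "walk_expect t (\<lambda>xs. of_bool (crosses_at S i xs))
      = walk_expect (Suc i + s) (\<lambda>xs. of_bool (crosses_at S i (take (Suc (Suc i)) xs)))"
    by (simp add: t crosses_at_take)
  also have "\<dots> = walk_expect (Suc i) (\<lambda>ys. of_bool (crosses_at S i ys))"
    by (rule walk_expect_prefix)
  also have "\<dots> = cross_rate S"
    using walk_expect_crosses_at_last[where g="\<lambda>_. 1" and j=i]
    by (simp add: walk_expect_last cross_rate_def)
  finally show ?thesis .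
qed

text \<open>Given the walk up to step \<open>i + 1\<close>, its vertex at step \<open>j\<close> is distributed as
  \<open>walk_dist\<close> after \<open>j - i - 1 \<ge> T\<close> further steps, which the mixing bound controls.\<close>
lemma expect_crosses_at_pair_le:
  assumes "Suc i + T \<le> j" "j < t"
    and mix: "\<forall>v\<in>V. \<forall>x\<in>V. walk_dist V adj T v x \<le> \<mu> x + \<delta>"
  shows "walk_expect t (\<lambda>xs. of_bool (crosses_at S i xs \<and> crosses_at S j xs))
    \<le> cross_rate S * (cross_rate S + \<delta> * (\<Sum>x\<in>V. cross_prob S x))"
proof -
  obtain r where t: "t = Suc j + r" using assms(2) less_iff_Suc_add by auto
  obtain s where j: "j = Suc i + s" and "T \<le> s"
    using assms(1) by (intro that[of "j - Suc i"]) auto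
  define c where "c ys = (of_bool (crosses_at S i ys) :: real)" for ys
  have c_take: "c (take (Suc k) ys) = c ys" if "i < k" for k ys
    using that by (simp add: c_def crosses_at_take)
  have "walk_expect t (\<lambda>xs. of_bool (crosses_at S i xs \<and> crosses_at S j xs))
      = walk_expect (Suc j + r)
          (\<lambda>xs. c (take (Suc j) xs) * of_bool (crosses_at S j (take (Suc (Suc j)) xs)))"
    using j by (simp add: t c_take crosses_at_take) (simp add: c_def of_bool_conj)
  also have "\<dots> = walk_expect (Suc j) (\<lambda>ys. c (take (Suc j) ys) * of_bool (crosses_at S j ys))"
    using walk_expect_prefix[where m="Suc j" and s=r
        and g="\<lambda>ys. c (take (Suc j) ys) * of_bool (crosses_at S j ys)"]
    by simp
  also have "\<dots> = walk_expect j (\<lambda>zs. c zs * cross_prob S (last zs))"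
    by (rule walk_expect_crosses_at_last)
  also have "\<dots> = (\<Sum>x\<in>V. cross_prob S x *
      walk_expect (Suc i + s) (\<lambda>zs. c (take (Suc (Suc i)) zs) * of_bool (last zs = x)))"
    by (subst walk_expect_split_last)
       (auto simp: j c_take walk_expect_cmult[symmetric] intro!: sum.cong walk_expect_cong)
  also have "\<dots> = (\<Sum>x\<in>V. cross_prob S x *
      walk_expect (Suc i) (\<lambda>ys. c ys * walk_dist V adj s (last ys) x))"
    by (intro sum.cong refl arg_cong[where f="\<lambda>z. cross_prob S _ * z"] walk_expect_prefix_last)
  also have "\<dots> \<le> (\<Sum>x\<in>V. cross_prob S x * walk_expect (Suc i) (\<lambda>ys. c ys * (\<mu> x + \<delta>)))"
    using walk_dist_le_after[OF _ \<open>T \<le> s\<close>] mix last_in_walks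
    by (intro sum_mono mult_left_mono cross_prob_nonneg walk_expect_mono) (simp_all add: c_def)
  also have "\<dots> = (\<Sum>x\<in>V. (\<mu> x + \<delta>) * cross_prob S x) * walk_expect (Suc i) c"
    by (simp add: walk_expect_multc sum_distrib_left mult_ac)
  also have "(\<Sum>x\<in>V. (\<mu> x + \<delta>) * cross_prob S x) = cross_rate S + \<delta> * (\<Sum>x\<in>V. cross_prob S x)"
    by (simp add: cross_rate_def distrib_right sum.distrib sum_distrib_left)
  also have "walk_expect (Suc i) c = cross_rate S"
    unfolding c_def by (simp add: expect_crosses_at)
  finally show ?thesis by (simp add: mult.commute)
qed

section \<open>A second-moment lower bound\<close>

lemma hit_prob_eq_walk_expect:
  "hit_prob V adj t S = walk_expect t (\<lambda>xs. of_bool (traverses S xs))"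
  unfolding hit_prob_def walk_expect_def
  by (auto simp: sum.inter_filter[OF finite_walks[OF finite_V]] intro!: sum.cong)

lemma hit_prob_nonneg: "0 \<le> hit_prob V adj t S"
  unfolding hit_prob_eq_walk_expect by (rule walk_expect_nonneg) simp

lemma cross_rate_le_hit_prob: "0 < t \<Longrightarrow> cross_rate S \<le> hit_prob V adj t S"
  unfolding hit_prob_eq_walk_expect expect_crosses_at[symmetric, of 0 t S]
  by (intro walk_expect_mono) (auto simp: walks_def traverses_iff_crosses_at)

lemma expect_crossing_count_sq_le:
  fixes S :: "nat set set" and \<delta> :: real
  assumes I: "I \<subseteq> {..<t}"
    and spaced: "\<And>i j. i \<in> I \<Longrightarrow> j \<in> I \<Longrightarrow> i < j \<Longrightarrow> Suc i + T \<le> j"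
    and mix: "\<forall>v\<in>V. \<forall>x\<in>V. walk_dist V adj T v x \<le> \<mu> x + \<delta>" and "0 \<le> \<delta>"
  defines "b \<equiv> cross_rate S + \<delta> * (\<Sum>x\<in>V. cross_prob S x)"
  shows "walk_expect t (\<lambda>xs. (\<Sum>i\<in>I. of_bool (crosses_at S i xs))\<^sup>2)
    \<le> card I * cross_rate S + (real (card I))\<^sup>2 * (cross_rate S * b)"
proof -
  let ?a = "cross_rate S"
  have "0 \<le> ?a * b"
    using \<open>0 \<le> \<delta>\<close> stat_dist_nonneg cross_prob_nonneg
    by (auto simp: b_def cross_rate_def intro!: mult_nonneg_nonneg sum_nonneg add_nonneg_nonneg)
  have pair: "walk_expect t (\<lambda>xs. of_bool (crosses_at S i xs \<and> crosses_at S j xs))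
      \<le> of_bool (j = i) * ?a + ?a * b" if "i \<in> I" "j \<in> I" for i j
  proof (cases i j rule: linorder_cases)
    case less
    then show ?thesis
      using expect_crosses_at_pair_le[OF spaced[OF that less] _ mix] that I by (auto simp: b_def)
  next
    case equal
    then show ?thesis using expect_crosses_at[of i t S] \<open>0 \<le> ?a * b\<close> that I by auto
  next
    case greater
    then show ?thesis
      using expect_crosses_at_pair_le[OF spaced[OF that(2,1) greater] _ mix] that I
      by (auto simp: b_def conj_commute)
  qed
  have "walk_expect t (\<lambda>xs. (\<Sum>i\<in>I. of_bool (crosses_at S i xs))\<^sup>2)
      = (\<Sum>i\<in>I. \<Sum>j\<in>I. walk_expect t (\<lambda>xs. of_bool (crosses_at S i xs \<and> crosses_at S j xs)))"
    by (simp add: power2_eq_square sum_product of_bool_conj walk_expect_sum)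
  also have "\<dots> \<le> (\<Sum>i\<in>I. \<Sum>j\<in>I. of_bool (j = i) * ?a + ?a * b)"
    by (intro sum_mono pair)
  also have "\<dots> = (\<Sum>i\<in>I. ?a + card I * (?a * b))"
    using finite_subset[OF I]
    by (intro sum.cong refl)
       (simp add: sum.distrib of_bool_def if_distrib[of "\<lambda>z. z * _"] cong: if_cong)
  also have "\<dots> = card I * ?a + (real (card I))\<^sup>2 * (?a * b)"
    by (simp add: power2_eq_square algebra_simps)
  finally show ?thesis .
qed

lemma hit_prob_ge_second_moment:
  fixes S :: "nat set set" and \<delta> :: real
  assumes I: "I \<subseteq> {..<t}"
    and spaced: "\<And>i j. i \<in> I \<Longrightarrow> j \<in> I \<Longrightarrow> i < j \<Longrightarrow> Suc i + T \<le> j"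
    and mix: "\<forall>v\<in>V. \<forall>x\<in>V. walk_dist V adj T v x \<le> \<mu> x + \<delta>" and "0 \<le> \<delta>"
  defines "b \<equiv> cross_rate S + \<delta> * (\<Sum>x\<in>V. cross_prob S x)"
  shows "card I * cross_rate S
      - (card I * cross_rate S + (real (card I))\<^sup>2 * (cross_rate S * b)) / 2
    \<le> hit_prob V adj t S"
proof -
  define N where "N = (\<lambda>xs. \<Sum>i\<in>I. of_bool (crosses_at S i xs) :: real)"
  have "N xs - (N xs)\<^sup>2 / 2 \<le> of_bool (traverses S xs)" if "xs \<in> walks V t" for xs
  proof (cases "traverses S xs")
    case True
    have "0 \<le> (N xs - 1)\<^sup>2" by simp
    then show ?thesis using True by (simp add: power2_eq_square algebra_simps)
  next
    case False
    then have "N xs = 0"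
      using that I by (auto simp: N_def walks_def traverses_iff_crosses_at intro!: sum.neutral)
    then show ?thesis by simp
  qed
  then have "walk_expect t (\<lambda>xs. N xs - (N xs)\<^sup>2 / 2) \<le> hit_prob V adj t S"
    unfolding hit_prob_eq_walk_expect by (rule walk_expect_mono)
  moreover have "walk_expect t (\<lambda>xs. N xs - (N xs)\<^sup>2 / 2)
      = walk_expect t N - walk_expect t (\<lambda>xs. (N xs)\<^sup>2) / 2"
    using walk_expect_add[of t N "\<lambda>xs. (- 1 / 2) * (N xs)\<^sup>2"]
      walk_expect_cmult[of t "- 1 / 2" "\<lambda>xs. (N xs)\<^sup>2"]
    by simp
  moreover have "walk_expect t N = (\<Sum>i\<in>I. cross_rate S)"
    unfolding N_def walk_expect_sum using I by (intro sum.cong) (auto simp: expect_crosses_at)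
  then have "walk_expect t N = card I * cross_rate S" by simp
  moreover have "walk_expect t (\<lambda>xs. (N xs)\<^sup>2)
      \<le> card I * cross_rate S + (real (card I))\<^sup>2 * (cross_rate S * b)"
    unfolding N_def b_def using expect_crossing_count_sq_le[OF I spaced mix \<open>0 \<le> \<delta>\<close>] .
  ultimately show ?thesis by argo
qed

lemma hit_prob_ge_spaced_steps:
  fixes S :: "nat set set" and \<delta> :: real
  assumes mix: "\<forall>v\<in>V. \<forall>x\<in>V. walk_dist V adj T v x \<le> \<mu> x + \<delta>" and "0 \<le> \<delta>"
    and \<delta>_small: "\<delta> * (\<Sum>x\<in>V. cross_prob S x) \<le> cross_rate S / 2"
    and m: "m * Suc T \<le> t + T" "m * cross_rate S \<le> 1 / 4"
  shows "m * cross_rate S / 4 \<le> hit_prob V adj t S"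
proof -
  define I where "I = (\<lambda>r. r * Suc T) ` {..<m}"
  have "card I = m"
    unfolding I_def by (subst card_image) (auto simp: inj_on_def simp del: mult_Suc_right)
  have I: "I \<subseteq> {..<t}"
  proof
    fix i assume "i \<in> I"
    then obtain r where "r < m" "i = r * Suc T" unfolding I_def by auto
    moreover from \<open>r < m\<close> have "Suc r * Suc T \<le> m * Suc T" by (intro mult_le_mono1) simp
    ultimately show "i \<in> {..<t}" using m(1) by simp
  qed
  have spaced: "Suc i + T \<le> j" if ij: "i \<in> I" "j \<in> I" "i < j" for i j
  proof -
    obtain r r' where "i = r * Suc T" "j = r' * Suc T" using ij(1,2) unfolding I_def by auto
    moreover from this have "Suc r * Suc T \<le> r' * Suc T"
      using \<open>i < j\<close> by (intro mult_le_mono1) (simp add: Suc_le_eq del: mult_Suc_right)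
    ultimately show ?thesis by simp
  qed
  define a where "a = cross_rate S"
  define b where "b = cross_rate S + \<delta> * (\<Sum>x\<in>V. cross_prob S x)"
  define y where "y = m * a"
  have hit: "y - (y + (real m)\<^sup>2 * (a * b)) / 2 \<le> hit_prob V adj t S"
    using hit_prob_ge_second_moment[OF I spaced mix \<open>0 \<le> \<delta>\<close>]
    by (simp add: y_def a_def b_def \<open>card I = m\<close>)
  have "0 \<le> a"
    unfolding a_def cross_rate_def
    by (intro sum_nonneg mult_nonneg_nonneg stat_dist_nonneg cross_prob_nonneg)
  have "(real m)\<^sup>2 * (a * b) \<le> (real m)\<^sup>2 * (a * (3 / 2 * a))"
    using \<delta>_small \<open>0 \<le> a\<close> by (intro mult_left_mono) (auto simp: a_def b_def)
  also have "\<dots> = 3 / 2 * y * y"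
    by (simp add: y_def power2_eq_square)
  also have "\<dots> \<le> 3 / 2 * y * (1 / 4)"
    using m(2) \<open>0 \<le> a\<close> by (intro mult_left_mono) (auto simp: y_def a_def)
  finally have "(real m)\<^sup>2 * (a * b) \<le> 3 / 8 * y"
    by simp
  moreover have "0 \<le> y"
    using \<open>0 \<le> a\<close> by (simp add: y_def)
  ultimately show ?thesis
    using hit unfolding y_def a_def by argo
qed

section \<open>Counting edges\<close>

lemma finite_edges: "finite (edges V adj)"
proof (rule finite_subset)
  show "edges V adj \<subseteq> Pow V" by (auto simp: edges_def)
qed (simp add: finite_V)

lemma card_incident_edges:
  assumes "S \<subseteq> edges V adj"
  shows "card {y\<in>V. adj x y \<and> {x, y} \<in> S} = card {e\<in>S. x \<in> e}"
proof (rule bij_betw_same_card)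
  show "bij_betw (\<lambda>y. {x, y}) {y\<in>V. adj x y \<and> {x, y} \<in> S} {e\<in>S. x \<in> e}"
  proof (rule bij_betw_imageI)
    show "inj_on (\<lambda>y. {x, y}) {y\<in>V. adj x y \<and> {x, y} \<in> S}"
      by (auto simp: inj_on_def doubleton_eq_iff)
    show "(\<lambda>y. {x, y}) ` {y\<in>V. adj x y \<and> {x, y} \<in> S} = {e\<in>S. x \<in> e}"
    proof (intro equalityI subsetI)
      fix e assume e: "e \<in> {e\<in>S. x \<in> e}"
      then obtain u v where uv: "e = {u, v}" "adj u v" using assms by (auto simp: edges_def)
      obtain y where "e = {x, y}" "adj x y"
      proof (cases "x = u")
        case True
        then show ?thesis using that uv by blast
      next
        case False
        then have "x = v" using e uv by auto
        then show ?thesis using that[of u] uv adjD[of u v] by (simp add: insert_commute)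
      qed
      moreover have "y \<in> V" using \<open>adj x y\<close> adjD by blast
      ultimately show "e \<in> (\<lambda>y. {x, y}) ` {y\<in>V. adj x y \<and> {x, y} \<in> S}"
        using e by (intro image_eqI[of e _ y]) auto
    qed auto
  qed
qed

lemma handshake:
  assumes "S \<subseteq> edges V adj"
  shows "(\<Sum>x\<in>V. card {e\<in>S. x \<in> e}) = 2 * card S"
proof -
  have "finite S" using assms finite_edges finite_subset by blast
  have "(\<Sum>x\<in>V. card {e\<in>S. x \<in> e}) = (\<Sum>x\<in>V. \<Sum>e\<in>S. of_bool (x \<in> e))"
    using \<open>finite S\<close> by (simp add: Int_def)
  also have "\<dots> = (\<Sum>e\<in>S. \<Sum>x\<in>V. of_bool (x \<in> e))"
    by (rule sum.swap)
  also have "\<dots> = (\<Sum>e\<in>S. card e)"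
    using finite_V assms by (intro sum.cong refl) (auto simp: edges_def Int_absorb1)
  also have "\<dots> = (\<Sum>e\<in>S. 2)"
    using assms adjD by (intro sum.cong refl) (auto simp: edges_def)
  finally show ?thesis by simp
qed

lemma cross_prob_eq:
  "cross_prob S x = card {y\<in>V. adj x y \<and> {x, y} \<in> S} / degree V adj x"
proof -
  have "cross_prob S x = (\<Sum>y\<in>V. if adj x y \<and> {x, y} \<in> S then 1 / degree V adj x else 0)"
    unfolding cross_prob_def trans_prob_def by (intro sum.cong) auto
  then show ?thesis
    by (simp add: sum.inter_filter[OF finite_V, symmetric])
qed

lemma cross_rate_eq:
  assumes "S \<subseteq> edges V adj"
  shows "cross_rate S = real (card S) / real (card (edges V adj))"
proof -
  have "cross_rate S = (\<Sum>x\<in>V. card {e\<in>S. x \<in> e} / (2 * card (edges V adj)))"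
    unfolding cross_rate_def using degree_pos card_incident_edges[OF assms]
    by (intro sum.cong) (auto simp: cross_prob_eq stat_dist_def)
  also have "\<dots> = card S / card (edges V adj)"
    by (simp add: sum_divide_distrib[symmetric] handshake[OF assms] flip: of_nat_sum)
  finally show ?thesis .
qed

lemma sum_cross_prob_le:
  assumes "S \<subseteq> edges V adj"
  shows "(\<Sum>x\<in>V. cross_prob S x) \<le> 2 * card S"
proof -
  have "cross_prob S x \<le> card {e\<in>S. x \<in> e}" if "x \<in> V" for x
    using degree_pos[OF that] card_incident_edges[OF assms]
    by (simp add: cross_prob_eq divide_le_eq mult_le_cancel_left1 mult_le_cancel_left2)
  then have "(\<Sum>x\<in>V. cross_prob S x) \<le> (\<Sum>x\<in>V. real (card {e\<in>S. x \<in> e}))"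
    by (rule sum_mono)
  also have "\<dots> = 2 * card S"
    by (simp add: handshake[OF assms] flip: of_nat_sum)
  finally show ?thesis .
qed

lemma card_edges_le: "card (edges V adj) \<le> (card V)\<^sup>2"
proof -
  have "edges V adj \<subseteq> (\<lambda>(u, v). {u, v}) ` (V \<times> V)"
  proof
    fix e assume "e \<in> edges V adj"
    then obtain u v where "e = {u, v}" "u \<in> V" "v \<in> V" by (auto simp: edges_def)
    then show "e \<in> (\<lambda>(u, v). {u, v}) ` (V \<times> V)" by (intro image_eqI[of _ _ "(u, v)"]) auto
  qed
  then have "card (edges V adj) \<le> card ((\<lambda>(u, v). {u, v}) ` (V \<times> V))"
    using finite_V by (intro card_mono) auto
  also have "\<dots> \<le> card (V \<times> V)"
    by (rule card_image_le) (simp add: finite_V)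
  finally show ?thesis by (simp add: card_cartesian_product power2_eq_square)
qed

lemma inverse_square_le_edges:
  assumes "1 \<le> c" "0 < card (edges V adj)"
  shows "1 / (2 * c * real (card V))\<^sup>2 \<le> 1 / (4 * real (card (edges V adj)))"
proof -
  have "4 * real (card (edges V adj)) \<le> 4 * (real (card V))\<^sup>2"
    using card_edges_le by (simp flip: of_nat_power)
  also have "\<dots> \<le> 4 * (c\<^sup>2 * (real (card V))\<^sup>2)"
    using assms(1) by (intro mult_left_mono) (simp_all add: mult_le_cancel_right1 one_le_power)
  also have "\<dots> = (2 * c * real (card V))\<^sup>2"
    by (simp add: power_mult_distrib)
  finally show ?thesis
    using assms(2) by (intro frac_le) auto
qed

end

section \<open>The main estimate\<close>

text \<open>The witness is \<open>min \<lceil>t / (T + 1)\<rceil> \<lfloor>1 / (4 a)\<rfloor>\<close>.\<close>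
lemma exists_spaced_count:
  fixes a :: real
  assumes "0 < a" "a \<le> 1 / 4" "0 < T"
  shows "\<exists>m. m * Suc T \<le> t + T \<and> m * a \<le> 1 / 4 \<and> min (1 / 8) (t * a / (2 * real T)) \<le> m * a"
proof -
  define M where "M = (t + T) div Suc T"
  define x where "x = 1 / (4 * a)"
  define K where "K = nat \<lfloor>x\<rfloor>"
  have M_le: "M * Suc T \<le> t + T"
    unfolding M_def by (rule div_times_less_eq_dividend)
  have "t \<le> M * Suc T"
    using div_mult_mod_eq[of "t + T" "Suc T"] mod_less_divisor[of "Suc T" "t + T"]
    unfolding M_def by linarith
  then have "real t \<le> M * real (Suc T)"
    by (simp only: of_nat_mult[symmetric] of_nat_le_iff)
  also have "\<dots> \<le> M * (2 * real T)"
    using assms(3) by (intro mult_left_mono) auto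
  finally have "t * a \<le> M * a * (2 * real T)"
    using assms(1) by (simp add: mult_right_mono mult_ac)
  then have M_ge: "t * a / (2 * real T) \<le> M * a"
    using assms(3) by (simp add: pos_divide_le_eq)
  have "1 \<le> x" using assms by (simp add: x_def field_simps)
  then have "real K = of_int \<lfloor>x\<rfloor>" "(1::real) \<le> of_int \<lfloor>x\<rfloor>"
    by (simp_all add: K_def le_floor_iff)
  then have "real K \<le> x" "x \<le> 2 * real K"
    using real_of_int_floor_gt_diff_one[of x] of_int_floor_le[of x] by linarith+
  then have K_le: "K * a \<le> 1 / 4" and K_ge: "1 / 8 \<le> K * a"
    using assms(1) by (simp_all add: x_def field_simps)
  show ?thesis
  proof (cases "M \<le> K")
    case True
    then have "M * a \<le> K * a" using assms(1) by (simp add: mult_right_mono)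
    with M_le M_ge K_le show ?thesis by (intro exI[of _ M]) auto
  next
    case False
    then have "K * Suc T \<le> t + T" using M_le by (meson le_trans mult_le_mono1 nle_le)
    with K_le K_ge show ?thesis by (intro exI[of _ K]) auto
  qed
qed

context walk_graph
begin

lemma hit_prob_ge_min:
  assumes S: "S \<subseteq> edges V adj" "S \<noteq> {}" and "0 < t" "0 < T"
    and mix: "\<forall>v\<in>V. \<forall>x\<in>V. walk_dist V adj T v x \<le> \<mu> x + \<delta>"
    and "0 \<le> \<delta>" "\<delta> \<le> 1 / (4 * real (card (edges V adj)))"
  shows "min (1 / 32) (real t * (real (card S) / real (card (edges V adj))) / (8 * real T))
    \<le> hit_prob V adj t S"
proof -
  define a where "a = cross_rate S"
  have a_eq: "real (card S) / real (card (edges V adj)) = a"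
    by (simp add: a_def cross_rate_eq[OF S(1)])
  have "finite S" using S(1) finite_edges by (rule finite_subset)
  then have "0 < card S" "card S \<le> card (edges V adj)"
    using S finite_edges by (simp_all add: card_gt_0_iff card_mono)
  then have "0 < a" by (simp flip: a_eq)
  have "\<delta> * (\<Sum>x\<in>V. cross_prob S x) \<le> 1 / (4 * card (edges V adj)) * (2 * card S)"
    using sum_cross_prob_le[OF S(1)] \<open>0 \<le> \<delta>\<close> \<open>\<delta> \<le> _\<close>
    by (intro mult_mono) (auto intro: sum_nonneg cross_prob_nonneg)
  also have "\<dots> = a / 2" by (simp flip: a_eq)
  finally have \<delta>_small: "\<delta> * (\<Sum>x\<in>V. cross_prob S x) \<le> cross_rate S / 2"
    by (simp add: a_def)
  show ?thesis
    unfolding a_eq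
  proof (cases "a \<le> 1 / 4")
    case True
    then obtain m where m: "m * Suc T \<le> t + T" "m * a \<le> 1 / 4"
      "min (1 / 8) (t * a / (2 * real T)) \<le> m * a"
      using exists_spaced_count[OF \<open>0 < a\<close> True \<open>0 < T\<close>] by blast
    have "m * a / 4 \<le> hit_prob V adj t S"
      using hit_prob_ge_spaced_steps[OF mix \<open>0 \<le> \<delta>\<close> \<delta>_small m(1)] m(2) by (simp add: a_def)
    moreover have "min (1 / 32) (t * a / (8 * real T)) = min (1 / 8) (t * a / (2 * real T)) / 4"
      by (simp add: min_def)
    ultimately show "min (1 / 32) (t * a / (8 * real T)) \<le> hit_prob V adj t S"
      using m(3) by argo
  next
    case False
    then show "min (1 / 32) (t * a / (8 * real T)) \<le> hit_prob V adj t S"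
      using cross_rate_le_hit_prob[OF \<open>0 < t\<close>, of S] by (simp add: a_def min_le_iff_disj)
  qed
qed

end

lemma scaled_le_min:
  fixes x C T :: real
  assumes "0 \<le> x" "x \<le> C" "1 \<le> T"
  shows "x / (32 * (\<bar>C\<bar> + 1) * T) \<le> min (1 / 32) (x / (8 * T))"
proof -
  have "x / (32 * (\<bar>C\<bar> + 1) * T) \<le> x / (32 * (\<bar>C\<bar> + 1))"
    using assms by (intro divide_left_mono) (auto intro: mult_pos_pos)
  also have "\<dots> \<le> 1 / 32"
    using assms by (simp add: divide_le_eq)
  finally have "x / (32 * (\<bar>C\<bar> + 1) * T) \<le> 1 / 32" .
  moreover have "x / (32 * (\<bar>C\<bar> + 1) * T) \<le> x / (8 * T)"
    using assms by (intro divide_left_mono) (auto intro: mult_pos_pos)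
  ultimately show ?thesis by simp
qed

theorem lemma2:
  fixes c T0 C :: real
  assumes "c \<ge> 1"
  shows "\<exists>c0 > 0. \<exists>D0::nat. \<forall>V adj D T t S.
    ugraph V adj \<and> connected_graph V adj \<and> uniform_graph V adj D c \<and> D \<ge> D0 \<and>
    is_mixing_time V adj (1 / (2 * c * real (card V))\<^sup>2) T \<and> real T \<le> T0 \<and>
    S \<subseteq> edges V adj \<and> real t * real (card S) \<le> C * real (card (edges V adj))
    \<longrightarrow> hit_prob V adj t S \<ge>
          c0 * (real t * real (card S)) / (real T * real (card (edges V adj)))"
proof (intro exI[of _ "1 / (32 * (\<bar>C\<bar> + 1))"] conjI exI[of _ "1::nat"] allI impI)
  fix V adj D T t S
  assume H: "ugraph V adj \<and> connected_graph V adj \<and> uniform_graph V adj D c \<and> D \<ge> 1 \<and>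
    is_mixing_time V adj (1 / (2 * c * real (card V))\<^sup>2) T \<and> real T \<le> T0 \<and>
    S \<subseteq> edges V adj \<and> real t * real (card S) \<le> C * real (card (edges V adj))"
  then interpret walk_graph V adj
    by unfold_locales (auto simp: uniform_graph_def intro: order.strict_trans2)
  let ?E = "card (edges V adj)" and ?\<delta> = "1 / (2 * c * real (card V))\<^sup>2"
  have mix: "\<forall>v\<in>V. \<forall>x\<in>V. walk_dist V adj T v x \<le> \<mu> x + ?\<delta>"
    using H by (force simp: is_mixing_time_def mixed_at_def abs_le_iff)
  show "1 / (32 * (\<bar>C\<bar> + 1)) * (real t * real (card S)) / (real T * real ?E) \<le> hit_prob V adj t S"
  proof (cases "S = {} \<or> t = 0 \<or> T = 0")
    case True
    then show ?thesis using hit_prob_nonneg by auto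
  next
    case False
    then have "0 < ?E" using H finite_edges by (auto simp: card_gt_0_iff intro: finite_subset)
    have "1 / (32 * (\<bar>C\<bar> + 1)) * (real t * real (card S)) / (real T * real ?E)
        = real t * (card S / ?E) / (32 * (\<bar>C\<bar> + 1) * T)" by simp
    also have "\<dots> \<le> min (1 / 32) (real t * (card S / ?E) / (8 * real T))"
      using H False \<open>0 < ?E\<close> by (intro scaled_le_min) (auto simp: pos_divide_le_eq)
    also have "\<dots> \<le> hit_prob V adj t S"
      using H False mix inverse_square_le_edges[OF assms \<open>0 < ?E\<close>] by (intro hit_prob_ge_min) auto
    finally show ?thesis .
  qed
qed (simp add: add_pos_nonneg)

end
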